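(* Let $\mathcal V$ be a finite set of nodes, $\mathcal P$ a finite set of labels, $\mathcal E$ a set of unordered pairs of nodes, and $\theta_{ip},\theta_{ij,pq}\in\mathbb R$ arbitrary. For $\vec\lambda\in\mathbb R^{\mathcal V}$, let $L(\cdot,\vec\lambda)$ be the pairwise pseudo-Boolean function $$L(\vec y,\vec\lambda)=\sum_{i\in\mathcal V}\sum_{p\in\mathcal P}\theta_{ip}y_{ip}+\sum_{\{i,j\}\in\mathcal E}\sum_{p,q\in\mathcal P}\theta_{ij,pq}y_{ip}y_{jq}+\sum_{i\in\mathcal V}\lambda_i\Big(\sum_{p\in\mathcal P}y_{ip}-1\Big)$$ of binary variables $\vec y$, and let $D_{QPBO}(\vec\lambda)$ be the optimal value of the standard LP relaxation of $\min_{\vec y}L(\vec y,\vec\lambda)$. Then $\max_{\vec\lambda\in\mathbb R^{\mathcal V}}D_{QPBO}(\vec\lambda)$ equals the optimal value of the linear program $$\min_{\vec y}\ \sum_{i\in\mathcal V}\sum_{p\in\mathcal P}\theta_{ip}y_{ip}+\sum_{\{i,j\}\in\mathcal E}\sum_{p,q\in\mathcal P}\theta_{ij,pq}y_{ij,pq}$$ subject to $y_{ip},y_{ij,pq}\in[0,1]$; $y_{ij,pq}\le y_{ip}$ and $y_{ij,pq}\le y_{jq}$ for all $\{i,j\}\in\mathcal E$, $p,q\in\mathcal P$; $y_{ij,pq}\ge y_{ip}+y_{jq}-1$ for all $\{i,j\}\in\mathcal E$, $p,q\in\mathcal P$; and $\sum_{p\in\mathcal P}y_{ip}=1$ for all $i\in\mathcal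 V$.
   Context: The standard LP relaxation of minimizing a pairwise pseudo-Boolean function $F(\vec y)=c+\sum_{i\in\mathcal A}a_iy_i+\sum_{\{i,j\}\in\mathcal B}b_{ij}y_iy_j$ over $\vec y\in\{0,1\}^{\mathcal A}$ (with $\mathcal B$ a set of pairs from $\mathcal A$, $c$ a constant) is: minimize $c+\sum_i a_iz_{i1}+\sum_{\{i,j\}}b_{ij}z_{ij,11}$ over nonnegative variables $z_{i1},z_{i0},z_{ij,11},z_{ij,10},z_{ij,01},z_{ij,00}$ subject to $z_{i1}+z_{i0}=1$, $z_{ij,10}+z_{ij,11}=z_{i1}$, $z_{ij,01}+z_{ij,00}=z_{i0}$, $z_{ij,01}+z_{ij,11}=z_{j1}$, $z_{ij,00}+z_{ij,10}=z_{j0}$. Here it is applied with variables $y_{ip}$ indexed by $(i,p)\in\mathcal V\times\mathcal P$ and pairs $\{(i,p),(j,q)\}$ for $\{i,j\}\in\mathcal E$. (This lower bound is the one computed by the QPBO algorithm; the method is called nonsubmodular relaxation.) *)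

theory Defs
  imports Complex_Main "HOL-Library.Extended_Real"
begin

text \<open>Each unordered pair {i,j} of B is represented by
  exactly one ordered pair (i,j) (an orientation), which fixes the meaning of
  the oriented LP variables z_{ij,10}, z_{ij,01}.\<close>

definition pb_fun ::
  "'a set \<Rightarrow> ('a \<Rightarrow> real) \<Rightarrow> ('a \<times> 'a) set \<Rightarrow> ('a \<times> 'a \<Rightarrow> real) \<Rightarrow> real
   \<Rightarrow> ('a \<Rightarrow> real) \<Rightarrow> real" where
  "pb_fun A a B b c y = c + (\<Sum>i\<in>A. a i * y i) + (\<Sum>e\<in>B. b e * y (fst e) * y (snd e))"

definition qpbo_feasible ::
  "'a set \<Rightarrow> ('a \<times> 'a) set \<Rightarrow> ('a \<Rightarrow> real) \<Rightarrow> ('a \<Rightarrow> real)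
   \<Rightarrow> ('a \<times> 'a \<Rightarrow> real) \<Rightarrow> ('a \<times> 'a \<Rightarrow> real) \<Rightarrow> ('a \<times> 'a \<Rightarrow> real) \<Rightarrow> ('a \<times> 'a \<Rightarrow> real)
   \<Rightarrow> bool" where
  "qpbo_feasible A B z1 z0 z11 z10 z01 z00 \<longleftrightarrow>
     (\<forall>i\<in>A. z1 i \<ge> 0 \<and> z0 i \<ge> 0 \<and> z1 i + z0 i = 1) \<and>
     (\<forall>(i,j)\<in>B. z11 (i,j) \<ge> 0 \<and> z10 (i,j) \<ge> 0 \<and> z01 (i,j) \<ge> 0 \<and> z00 (i,j) \<ge> 0 \<and>
        z10 (i,j) + z11 (i,j) = z1 i \<and>
        z01 (i,j) + z00 (i,j) = z0 i \<and>
        z01 (i,j) + z11 (i,j) = z1 j \<and>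
        z00 (i,j) + z10 (i,j) = z0 j)"

definition qpbo_lp_value ::
  "'a set \<Rightarrow> ('a \<Rightarrow> real) \<Rightarrow> ('a \<times> 'a) set \<Rightarrow> ('a \<times> 'a \<Rightarrow> real) \<Rightarrow> real \<Rightarrow> ereal" where
  "qpbo_lp_value A a B b c =
     Inf { ereal (c + (\<Sum>i\<in>A. a i * z1 i) + (\<Sum>e\<in>B. b e * z11 e)) | z1 z0 z11 z10 z01 z00.
           qpbo_feasible A B z1 z0 z11 z10 z01 z00 }"

text \<open>Nodes V, labels P, edges E given as oriented pairs (one orientation per
  unordered pair). Unary potentials th1 i p, pairwise potentials th2 i j p q
  (multiplying y_{ip} y_{jq} for the edge (i,j)).\<close>

definition lag_vars :: "('v \<times> 'v) set \<Rightarrow> 'p set \<Rightarrow> (('v \<times> 'p) \<times> ('v \<times> 'p)) set" where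
  "lag_vars E P = {((i,p),(j,q)) | i j p q. (i,j) \<in> E \<and> p \<in> P \<and> q \<in> P}"

definition lag_lin :: "('v \<Rightarrow> 'p \<Rightarrow> real) \<Rightarrow> ('v \<Rightarrow> real) \<Rightarrow> 'v \<times> 'p \<Rightarrow> real" where
  "lag_lin th1 lam = (\<lambda>(i,p). th1 i p + lam i)"

definition lag_quad :: "('v \<Rightarrow> 'v \<Rightarrow> 'p \<Rightarrow> 'p \<Rightarrow> real) \<Rightarrow> ('v \<times> 'p) \<times> ('v \<times> 'p) \<Rightarrow> real" where
  "lag_quad th2 = (\<lambda>((i,p),(j,q)). th2 i j p q)"

definition lag_const :: "'v set \<Rightarrow> ('v \<Rightarrow> real) \<Rightarrow> real" where
  "lag_const V lam = - (\<Sum>i\<in>V. lam i)"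

text \<open>L(y,lambda) written out; equals pb_fun with the coefficients above.\<close>
definition lagrangian ::
  "'v set \<Rightarrow> 'p set \<Rightarrow> ('v \<times> 'v) set \<Rightarrow> ('v \<Rightarrow> 'p \<Rightarrow> real) \<Rightarrow> ('v \<Rightarrow> 'v \<Rightarrow> 'p \<Rightarrow> 'p \<Rightarrow> real)
   \<Rightarrow> ('v \<Rightarrow> real) \<Rightarrow> ('v \<times> 'p \<Rightarrow> real) \<Rightarrow> real" where
  "lagrangian V P E th1 th2 lam y =
     (\<Sum>i\<in>V. \<Sum>p\<in>P. th1 i p * y (i,p))
     + (\<Sum>(i,j)\<in>E. \<Sum>p\<in>P. \<Sum>q\<in>P. th2 i j p q * y (i,p) * y (j,q))
     + (\<Sum>i\<in>V. lam i * ((\<Sum>p\<in>P. y (i,p)) - 1))"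

definition D_QPBO ::
  "'v set \<Rightarrow> 'p set \<Rightarrow> ('v \<times> 'v) set \<Rightarrow> ('v \<Rightarrow> 'p \<Rightarrow> real) \<Rightarrow> ('v \<Rightarrow> 'v \<Rightarrow> 'p \<Rightarrow> 'p \<Rightarrow> real)
   \<Rightarrow> ('v \<Rightarrow> real) \<Rightarrow> ereal" where
  "D_QPBO V P E th1 th2 lam =
     qpbo_lp_value (V \<times> P) (lag_lin th1 lam) (lag_vars E P) (lag_quad th2) (lag_const V lam)"

definition local_lp_feasible ::
  "'v set \<Rightarrow> 'p set \<Rightarrow> ('v \<times> 'v) set \<Rightarrow> ('v \<Rightarrow> 'p \<Rightarrow> real) \<Rightarrow> ('v \<Rightarrow> 'v \<Rightarrow> 'p \<Rightarrow> 'p \<Rightarrow> real) \<Rightarrow> bool" where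
  "local_lp_feasible V P E y1 y2 \<longleftrightarrow>
     (\<forall>i\<in>V. \<forall>p\<in>P. 0 \<le> y1 i p \<and> y1 i p \<le> 1) \<and>
     (\<forall>(i,j)\<in>E. \<forall>p\<in>P. \<forall>q\<in>P.
        0 \<le> y2 i j p q \<and> y2 i j p q \<le> 1 \<and>
        y2 i j p q \<le> y1 i p \<and> y2 i j p q \<le> y1 j q \<and>
        y2 i j p q \<ge> y1 i p + y1 j q - 1) \<and>
     (\<forall>i\<in>V. (\<Sum>p\<in>P. y1 i p) = 1)"

definition local_lp_value ::
  "'v set \<Rightarrow> 'p set \<Rightarrow> ('v \<times> 'v) set \<Rightarrow> ('v \<Rightarrow> 'p \<Rightarrow> real) \<Rightarrow> ('v \<Rightarrow> 'v \<Rightarrow> 'p \<Rightarrow> 'p \<Rightarrow> real) \<Rightarrow> ereal" where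
  "local_lp_value V P E th1 th2 =
     Inf { ereal ((\<Sum>i\<in>V. \<Sum>p\<in>P. th1 i p * y1 i p)
                 + (\<Sum>(i,j)\<in>E. \<Sum>p\<in>P. \<Sum>q\<in>P. th2 i j p q * y2 i j p q)) | y1 y2.
           local_lp_feasible V P E y1 y2 }"

end

theory Submission
  imports Defs
begin

text \<open>Weak duality is immediate: a feasible point of the local LP, completed by the marginals
  z_{ij,10} = y_{ip} - y_{ij,pq}, z_{ij,01} = y_{jq} - y_{ij,pq}, z_{ij,00} = 1 - y_{ip} - y_{jq} + y_{ij,pq},
  is feasible for the QPBO relaxation of L(., lambda) and makes the multiplier term vanish.
  Conversely, projecting out the marginals shows that the QPBO relaxation of L(., lambda) is the
  McCormick relaxation (box constraints and y_{ij,pq} <= y_{ip}, y_{jq}, y_{ij,pq} >= y_{ip} + y_{jq} - 1)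
  of the local LP objective plus lambda times the label-sum residuals. Hence max D_QPBO is the Lagrangian
  dual of the local LP with respect to its equality constraints, and linear programming duality, in
  the form of an affine Farkas lemma proved by Fourier-Motzkin elimination, closes the gap and
  yields an optimal lambda.\<close>

section \<open>Affine forms and their conic hulls\<close>

type_synonym 'x form = "('x \<Rightarrow> real) \<times> real"

definition form_eval :: "'x set \<Rightarrow> 'x form \<Rightarrow> ('x \<Rightarrow> real) \<Rightarrow> real" where
  "form_eval I f x = snd f + (\<Sum>i\<in>I. fst f i * x i)"

definition form_add :: "'x form \<Rightarrow> 'x form \<Rightarrow> 'x form" where
  "form_add f g = (\<lambda>i. fst f i + fst g i, snd f + snd g)"

definition form_scale :: "real \<Rightarrow> 'x form \<Rightarrow> 'x form" where
  "form_scale r f = (\<lambda>i. r * fst f i, r * snd f)"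

definition form_diff :: "'x form \<Rightarrow> 'x form \<Rightarrow> 'x form" where
  "form_diff f g = form_add f (form_scale (-1) g)"

definition form_const :: "real \<Rightarrow> 'x form" where
  "form_const c = (\<lambda>_. 0, c)"

definition form_var :: "'x \<Rightarrow> 'x form" where
  "form_var a = (\<lambda>i. of_bool (i = a), 0)"

definition satisfies :: "'x set \<Rightarrow> 'x form set \<Rightarrow> ('x \<Rightarrow> real) \<Rightarrow> bool" where
  "satisfies I K x \<longleftrightarrow> (\<forall>f\<in>K. 0 \<le> form_eval I f x)"

lemmas form_ops_defs = form_add_def form_scale_def form_diff_def form_const_def

lemma form_eval_add [simp]: "form_eval I (form_add f g) x = form_eval I f x + form_eval I g x"
  by (simp add: form_eval_def form_add_def sum.distrib distrib_right)

lemma form_eval_scale [simp]: "form_eval I (form_scale r f) x = r * form_eval I f x"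
  by (simp add: form_eval_def form_scale_def sum_distrib_left distrib_left mult.assoc)

lemma form_eval_diff [simp]: "form_eval I (form_diff f g) x = form_eval I f x - form_eval I g x"
  by (simp add: form_diff_def)

lemma form_eval_const [simp]: "form_eval I (form_const c) x = c"
  by (simp add: form_eval_def form_const_def)

lemma form_eval_var [simp]:
  assumes "finite I" "a \<in> I"
  shows "form_eval I (form_var a) x = x a"
proof -
  have "(\<Sum>i\<in>I. of_bool (i = a) * x i) = (\<Sum>i\<in>I. if i = a then x i else 0)"
    by (rule sum.cong) auto
  then show ?thesis using assms by (simp add: form_eval_def form_var_def)
qed

lemma satisfies_Un [simp]: "satisfies I (A \<union> B) x \<longleftrightarrow> satisfies I A x \<and> satisfies I B x"
  by (auto simp: satisfies_def)

inductive_set form_cone :: "'x form set \<Rightarrow> 'x form set" for K where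
  zero: "form_const 0 \<in> form_cone K"
| base: "f \<in> K \<Longrightarrow> f \<in> form_cone K"
| add: "f \<in> form_cone K \<Longrightarrow> g \<in> form_cone K \<Longrightarrow> form_add f g \<in> form_cone K"
| scale: "f \<in> form_cone K \<Longrightarrow> 0 \<le> r \<Longrightarrow> form_scale r f \<in> form_cone K"

lemma form_cone_nonneg: "f \<in> form_cone K \<Longrightarrow> satisfies I K x \<Longrightarrow> 0 \<le> form_eval I f x"
  by (induction f rule: form_cone.induct) (auto simp: satisfies_def)

lemma form_cone_mono: "f \<in> form_cone K' \<Longrightarrow> K' \<subseteq> form_cone K \<Longrightarrow> f \<in> form_cone K"
  by (induction f rule: form_cone.induct) (auto intro: form_cone.intros)

lemma form_cone_coeff_zero:
  "f \<in> form_cone K \<Longrightarrow> \<forall>g\<in>K. fst g j = 0 \<Longrightarrow> fst f j = 0"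
  by (induction f rule: form_cone.induct) (auto simp: form_ops_defs)

lemma form_cone_insert:
  assumes "f \<in> form_cone (insert g K)"
  shows "\<exists>a\<ge>0. \<exists>k\<in>form_cone K. f = form_add (form_scale a g) k"
  using assms
proof (induction f rule: form_cone.induct)
  case zero
  have "form_const 0 = form_add (form_scale 0 g) (form_const 0)" by (simp add: form_ops_defs)
  then show ?case by (metis order_refl form_cone.zero)
next
  case (base f)
  then show ?case
  proof
    assume "f = g"
    then have "f = form_add (form_scale 1 g) (form_const 0)" by (simp add: form_ops_defs)
    then show ?thesis by (metis zero_le_one form_cone.zero)
  next
    assume "f \<in> K"
    moreover have "f = form_add (form_scale 0 g) f" by (simp add: form_ops_defs)
    ultimately show ?thesis by (metis order_refl form_cone.base)
  qed
next
  case (add f1 f2)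
  then obtain a1 k1 a2 k2 where "0 \<le> a1" "k1 \<in> form_cone K" "f1 = form_add (form_scale a1 g) k1"
    "0 \<le> a2" "k2 \<in> form_cone K" "f2 = form_add (form_scale a2 g) k2" by blast
  moreover from this have
    "form_add f1 f2 = form_add (form_scale (a1 + a2) g) (form_add k1 k2)"
    by (simp add: form_ops_defs algebra_simps)
  ultimately show ?case by (metis add_nonneg_nonneg form_cone.add)
next
  case (scale f r)
  then obtain a k where "0 \<le> a" "k \<in> form_cone K" "f = form_add (form_scale a g) k" by blast
  moreover from this have "form_scale r f = form_add (form_scale (r * a) g) (form_scale r k)"
    by (simp add: form_ops_defs algebra_simps)
  ultimately show ?case using scale.hyps(2) by (metis mult_nonneg_nonneg form_cone.scale)
qed

lemma form_cone_Un:
  assumes "f \<in> form_cone (A \<union> B)"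
  shows "\<exists>a\<in>form_cone A. \<exists>b\<in>form_cone B. f = form_add a b"
  using assms
proof (induction f rule: form_cone.induct)
  case zero
  have "form_const 0 = form_add (form_const 0) (form_const 0)" by (simp add: form_ops_defs)
  then show ?case by (metis form_cone.zero)
next
  case (base f)
  have "f = form_add f (form_const 0)" "f = form_add (form_const 0) f"
    by (simp_all add: form_ops_defs)
  with base show ?case by (metis Un_iff form_cone.zero form_cone.base)
next
  case (add f1 f2)
  then obtain a1 b1 a2 b2 where "a1 \<in> form_cone A" "b1 \<in> form_cone B" "f1 = form_add a1 b1"
    "a2 \<in> form_cone A" "b2 \<in> form_cone B" "f2 = form_add a2 b2" by blast
  moreover from this have "form_add f1 f2 = form_add (form_add a1 a2) (form_add b1 b2)"
    by (simp add: form_ops_defs algebra_simps)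
  ultimately show ?case by (metis form_cone.add)
next
  case (scale f r)
  then obtain a b where "a \<in> form_cone A" "b \<in> form_cone B" "f = form_add a b" by blast
  moreover from this have "form_scale r f = form_add (form_scale r a) (form_scale r b)"
    by (simp add: form_ops_defs algebra_simps)
  ultimately show ?case using scale.hyps(2) by (metis form_cone.scale)
qed

lemma form_cone_image:
  assumes "f \<in> form_cone (h ` K)"
    and "h (form_const 0) = form_const 0"
    and "\<And>f g. h (form_add f g) = form_add (h f) (h g)"
    and "\<And>r f. h (form_scale r f) = form_scale r (h f)"
  shows "\<exists>g\<in>form_cone K. f = h g"
  using assms(1)
proof (induction f rule: form_cone.induct)
  case (add f1 f2)
  then show ?case by (metis assms(3) form_cone.add)
next
  case (scale f r)
  then show ?case by (metis assms(4) form_cone.scale)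
qed (use assms(2) in \<open>metis form_cone.zero, blast intro: form_cone.base\<close>)

section \<open>Fourier-Motzkin elimination, Farkas' lemma and Lagrangian duality\<close>

lemma exists_between_finite:
  fixes L U :: "real set"
  assumes "finite L" "finite U" "\<And>l u. l \<in> L \<Longrightarrow> u \<in> U \<Longrightarrow> l \<le> u"
  shows "\<exists>v. (\<forall>l\<in>L. l \<le> v) \<and> (\<forall>u\<in>U. v \<le> u)"
proof (cases "L = {}")
  case True
  then show ?thesis
    using assms(2) by (cases "U = {}") (auto intro!: exI[of _ "Min U"])
next
  case False
  then show ?thesis
    using assms by (intro exI[of _ "Max L"]) (auto simp: Max_le_iff)
qed

lemma form_eval_insert_update:
  assumes "finite I" "j \<notin> I"
  shows "form_eval (insert j I) f (x(j := v)) = form_eval I f x + fst f j * v"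
proof -
  have "(\<Sum>i\<in>I. fst f i * (x(j := v)) i) = (\<Sum>i\<in>I. fst f i * x i)"
    using assms(2) by (intro sum.cong) auto
  then show ?thesis using assms by (simp add: form_eval_def)
qed

definition fm_eliminate :: "'x \<Rightarrow> 'x form set \<Rightarrow> 'x form set" where
  "fm_eliminate j K = {f \<in> K. fst f j = 0} \<union>
     (\<lambda>(f, g). form_add (form_scale (- fst g j) f) (form_scale (fst f j) g))
       ` ({f \<in> K. 0 < fst f j} \<times> {g \<in> K. fst g j < 0})"

lemma finite_fm_eliminate: "finite K \<Longrightarrow> finite (fm_eliminate j K)"
  by (simp add: fm_eliminate_def)

lemma fm_eliminate_subset_cone: "fm_eliminate j K \<subseteq> form_cone K"
proof
  fix h assume "h \<in> fm_eliminate j K"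
  then consider "h \<in> K"
    | f g where "f \<in> K" "0 < fst f j" "g \<in> K" "fst g j < 0"
        "h = form_add (form_scale (- fst g j) f) (form_scale (fst f j) g)"
    by (auto simp: fm_eliminate_def)
  then show "h \<in> form_cone K"
  proof cases
    case 2
    then show ?thesis by (simp add: form_cone.add form_cone.scale form_cone.base)
  qed (rule form_cone.base)
qed

lemma fm_eliminate_coeff: "f \<in> fm_eliminate j K \<Longrightarrow> fst f j = 0"
  by (auto simp: fm_eliminate_def form_ops_defs)

lemma fm_eliminate_extend:
  assumes "finite I" "finite K" "j \<notin> I" and sat: "satisfies I (fm_eliminate j K) x"
  shows "\<exists>v. satisfies (insert j I) K (x(j := v))"
proof -
  define Kp where "Kp = {f \<in> K. 0 < fst f j}"
  define Kn where "Kn = {g \<in> K. fst g j < 0}"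
  define lower where "lower f = - form_eval I f x / fst f j" for f
  define upper where "upper g = form_eval I g x / (- fst g j)" for g
  have "lower f \<le> upper g" if "f \<in> Kp" "g \<in> Kn" for f g
  proof -
    have "form_add (form_scale (- fst g j) f) (form_scale (fst f j) g) \<in> fm_eliminate j K"
      using that by (auto simp: fm_eliminate_def Kp_def Kn_def)
    then have "0 \<le> - fst g j * form_eval I f x + fst f j * form_eval I g x"
      using sat by (auto simp: satisfies_def)
    with that show ?thesis
      by (simp add: lower_def upper_def Kp_def Kn_def divide_simps) (simp add: algebra_simps)
  qed
  then have "\<exists>v. (\<forall>l\<in>lower ` Kp. l \<le> v) \<and> (\<forall>u\<in>upper ` Kn. v \<le> u)"
    using assms(2) by (intro exists_between_finite) (auto simp: Kp_def Kn_def)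
  then obtain v where v: "\<forall>f\<in>Kp. lower f \<le> v" "\<forall>g\<in>Kn. v \<le> upper g" by auto
  have "0 \<le> form_eval I f x + fst f j * v" if "f \<in> K" for f
  proof (cases "fst f j" "0::real" rule: linorder_cases)
    case less
    with v(2) that have "v \<le> upper f" unfolding Kn_def by blast
    with less show ?thesis by (simp add: upper_def divide_simps) (simp add: algebra_simps)
  next
    case equal
    with that sat show ?thesis by (auto simp: satisfies_def fm_eliminate_def)
  next
    case greater
    with v(1) that have "lower f \<le> v" unfolding Kp_def by blast
    with greater show ?thesis by (simp add: lower_def divide_simps) (simp add: algebra_simps)
  qed
  then have "satisfies (insert j I) K (x(j := v))"
    using assms(1,3) by (simp add: satisfies_def form_eval_insert_update)
  then show ?thesis ..
qed

theorem infeasible_imp_negative_const_in_cone: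
  assumes "finite I" "finite K" "\<nexists>x. satisfies I K x"
  shows "\<exists>f\<in>form_cone K. (\<forall>i\<in>I. fst f i = 0) \<and> snd f < 0"
  using assms
proof (induction I arbitrary: K rule: finite_induct)
  case empty
  then obtain f where "f \<in> K" "snd f < 0" by (auto simp: satisfies_def form_eval_def not_le)
  then show ?case by (auto intro: form_cone.base)
next
  case (insert j I)
  have "\<nexists>x. satisfies I (fm_eliminate j K) x"
  proof
    assume "\<exists>x. satisfies I (fm_eliminate j K) x"
    then obtain x where "satisfies I (fm_eliminate j K) x" ..
    with fm_eliminate_extend[OF insert.hyps(1) insert.prems(1) insert.hyps(2)]
    obtain v where "satisfies (insert j I) K (x(j := v))" by blast
    with insert.prems(2) show False by blast
  qed
  then obtain f where f:
    "f \<in> form_cone (fm_eliminate j K)" "\<forall>i\<in>I. fst f i = 0" "snd f < 0"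
    using insert.IH[OF finite_fm_eliminate[OF insert.prems(1)]] by blast
  from f(1) have "fst f j = 0"
    by (rule form_cone_coeff_zero) (auto dest: fm_eliminate_coeff)
  moreover have "f \<in> form_cone K"
    by (rule form_cone_mono[OF f(1) fm_eliminate_subset_cone])
  ultimately show ?case using f(2,3) by auto
qed

definition homogenize :: "'x form \<Rightarrow> 'x option form" where
  "homogenize f = (case_option (snd f) (fst f), 0)"

lemma homogenize_const_zero: "homogenize (form_const 0) = form_const 0"
  by (simp add: homogenize_def form_const_def fun_eq_iff split: option.split)

lemma homogenize_add: "homogenize (form_add f g) = form_add (homogenize f) (homogenize g)"
  by (simp add: homogenize_def form_add_def fun_eq_iff split: option.split)

lemma homogenize_scale: "homogenize (form_scale r f) = form_scale r (homogenize f)"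
  by (simp add: homogenize_def form_scale_def fun_eq_iff split: option.split)

lemma form_eval_option:
  assumes "finite I"
  shows "form_eval (insert None (Some ` I)) f X
    = snd f + fst f None * X None + (\<Sum>i\<in>I. fst f (Some i) * X (Some i))"
  using assms by (simp add: form_eval_def sum.reindex)

lemma homogenized_system_infeasible:
  assumes "finite I" and x0: "satisfies I K x0"
    and bound: "\<And>x. satisfies I K x \<Longrightarrow> 0 \<le> d + (\<Sum>i\<in>I. u i * x i)"
  shows "\<nexists>X. satisfies (insert None (Some ` I))
    (insert (form_var None) (insert (case_option (- d) (\<lambda>i. - u i), - 1) (homogenize ` K))) X"
proof
  assume "\<exists>X. satisfies (insert None (Some ` I))
    (insert (form_var None) (insert (case_option (- d) (\<lambda>i. - u i), - 1) (homogenize ` K))) X"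
  then obtain X where "satisfies (insert None (Some ` I))
    (insert (form_var None) (insert (case_option (- d) (\<lambda>i. - u i), - 1) (homogenize ` K))) X" ..
  moreover define t x where "t = X None" and "x i = X (Some i)" for i
  ultimately have t: "0 \<le> t"
    and hom: "\<And>f. f \<in> K \<Longrightarrow> 0 \<le> snd f * t + (\<Sum>i\<in>I. fst f i * x i)"
    and obj: "d * t + (\<Sum>i\<in>I. u i * x i) \<le> -1"
    using assms(1)
    by (auto simp: satisfies_def form_eval_option homogenize_def form_var_def sum_negf)
  show False
  proof (cases "t = 0")
    case False
    with t have "0 < t" by simp
    have scaled: "(\<Sum>i\<in>I. a i * (x i / t)) = (\<Sum>i\<in>I. a i * x i) / t" for a
      by (simp add: sum_divide_distrib)
    have "satisfies I K (\<lambda>i. x i / t)"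
      unfolding satisfies_def form_eval_def scaled
    proof
      fix f assume "f \<in> K"
      have "snd f + (\<Sum>i\<in>I. fst f i * x i) / t = (snd f * t + (\<Sum>i\<in>I. fst f i * x i)) / t"
        using \<open>0 < t\<close> by (simp add: field_simps)
      with hom[OF \<open>f \<in> K\<close>] \<open>0 < t\<close> show "0 \<le> snd f + (\<Sum>i\<in>I. fst f i * x i) / t"
        by simp
    qed
    from bound[OF this, unfolded scaled] have "0 \<le> (d * t + (\<Sum>i\<in>I. u i * x i)) / t"
      using \<open>0 < t\<close> by (simp add: add_divide_distrib)
    then have "0 \<le> d * t + (\<Sum>i\<in>I. u i * x i)"
      using \<open>0 < t\<close> by (simp add: zero_le_divide_iff)
    with obj show False by linarith
  next
    case True
    \<comment> \<open>then x is a recession direction of the system along which the bound decreases\<close>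
    define s where "s = d + (\<Sum>i\<in>I. u i * x0 i) + 1"
    have "1 \<le> s" using bound[OF x0] by (simp add: s_def)
    have shifted: "(\<Sum>i\<in>I. a i * (x0 i + s * x i))
      = (\<Sum>i\<in>I. a i * x0 i) + s * (\<Sum>i\<in>I. a i * x i)" for a
      by (simp add: distrib_left sum.distrib sum_distrib_left algebra_simps)
    have "satisfies I K (\<lambda>i. x0 i + s * x i)"
      unfolding satisfies_def form_eval_def shifted
    proof
      fix f assume "f \<in> K"
      with x0 have "0 \<le> snd f + (\<Sum>i\<in>I. fst f i * x0 i)" by (simp add: satisfies_def form_eval_def)
      moreover have "0 \<le> s * (\<Sum>i\<in>I. fst f i * x i)"
        using hom[OF \<open>f \<in> K\<close>] True \<open>1 \<le> s\<close> by simp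
      ultimately show "0 \<le> snd f + ((\<Sum>i\<in>I. fst f i * x0 i) + s * (\<Sum>i\<in>I. fst f i * x i))"
        by linarith
    qed
    from bound[OF this] have "0 \<le> d + (\<Sum>i\<in>I. u i * x0 i) + s * (\<Sum>i\<in>I. u i * x i)"
      by (simp add: shifted)
    moreover have "s * (\<Sum>i\<in>I. u i * x i) \<le> - s"
      using mult_left_mono[of "\<Sum>i\<in>I. u i * x i" "-1" s] obj True \<open>1 \<le> s\<close> by simp
    ultimately show False by (simp add: s_def)
  qed
qed

theorem farkas_affine:
  assumes "finite I" "finite K" "satisfies I K x0"
    and "\<And>x. satisfies I K x \<Longrightarrow> 0 \<le> d + (\<Sum>i\<in>I. u i * x i)"
  shows "\<exists>\<psi>\<in>form_cone K. (\<forall>i\<in>I. fst \<psi> i = u i) \<and> snd \<psi> \<le> d"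
proof -
  \<comment> \<open>In the homogenized system the constant term becomes the coordinate None; this turns the
    non-strict implication into infeasibility and makes the certificate exact rather than approximate.\<close>
  define cut :: "'a option form" where "cut = (case_option (- d) (\<lambda>i. - u i), - 1)"
  obtain \<phi> where \<phi>: "\<phi> \<in> form_cone (insert (form_var None) (insert cut (homogenize ` K)))"
    "\<forall>i\<in>insert None (Some ` I). fst \<phi> i = 0" "snd \<phi> < 0"
    using infeasible_imp_negative_const_in_cone[OF _ _ homogenized_system_infeasible[OF assms(1,3,4)]]
      assms(1,2) unfolding cut_def by blast
  then obtain a b k where ab: "0 \<le> a" "0 \<le> b" "k \<in> form_cone (homogenize ` K)"
    and \<phi>_eq: "\<phi> = form_add (form_scale a (form_var None)) (form_add (form_scale b cut) k)"
    by (metis form_cone_insert)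
  then obtain \<psi> where \<psi>: "\<psi> \<in> form_cone K" "k = homogenize \<psi>"
    using form_cone_image homogenize_const_zero homogenize_add homogenize_scale by metis
  have coeffs: "snd \<phi> = - b" "fst \<phi> None = a - b * d + snd \<psi>"
    "\<And>i. fst \<phi> (Some i) = fst \<psi> i - b * u i"
    by (simp_all add: \<phi>_eq \<psi>(2) cut_def homogenize_def form_ops_defs form_var_def)
  with \<phi> have "0 < b" "snd \<psi> \<le> b * d" "\<forall>i\<in>I. fst \<psi> i = b * u i"
    using ab(1) by auto
  then show ?thesis
    using \<psi>(1) by (intro bexI[of _ "form_scale (1 / b) \<psi>"] form_cone.scale)
      (auto simp: form_scale_def field_simps)
qed

lemma form_cone_equalities:
  assumes "finite Kx" "f \<in> form_cone (g ` Kx \<union> (\<lambda>k. form_scale (-1) (g k)) ` Kx)"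
  shows "\<exists>\<nu>. \<forall>x. form_eval I f x = (\<Sum>k\<in>Kx. \<nu> k * form_eval I (g k) x)"
  using assms(2)
proof (induction f rule: form_cone.induct)
  case zero
  show ?case by (intro exI[of _ "\<lambda>_. 0"]) simp
next
  case (base f)
  obtain k c where k: "k \<in> Kx" and f: "\<And>x. form_eval I f x = c * form_eval I (g k) x"
  proof -
    from base consider k where "k \<in> Kx" "f = g k"
      | k where "k \<in> Kx" "f = form_scale (-1) (g k)" by blast
    then show ?thesis
    proof cases
      case 1
      then show ?thesis using that[of k 1] by simp
    next
      case 2
      then show ?thesis using that[of k "-1"] by simp
    qed
  qed
  have "form_eval I f x = (\<Sum>k'\<in>Kx. (if k' = k then c else 0) * form_eval I (g k') x)" for x
  proof -
    have "(\<Sum>k'\<in>Kx. (if k' = k then c else 0) * form_eval I (g k') x)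
      = (\<Sum>k'\<in>Kx. if k' = k then c * form_eval I (g k') x else 0)"
      by (rule sum.cong) auto
    with assms(1) k f show ?thesis by simp
  qed
  then show ?case by (intro exI[of _ "\<lambda>k'. if k' = k then c else 0"]) simp
next
  case (add f1 f2)
  then obtain \<nu>1 \<nu>2 where "\<forall>x. form_eval I f1 x = (\<Sum>k\<in>Kx. \<nu>1 k * form_eval I (g k) x)"
    "\<forall>x. form_eval I f2 x = (\<Sum>k\<in>Kx. \<nu>2 k * form_eval I (g k) x)" by blast
  then show ?case
    by (intro exI[of _ "\<lambda>k. \<nu>1 k + \<nu>2 k"]) (simp add: distrib_right sum.distrib)
next
  case (scale f r)
  then obtain \<nu> where "\<forall>x. form_eval I f x = (\<Sum>k\<in>Kx. \<nu> k * form_eval I (g k) x)" by blast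
  then show ?case
    by (intro exI[of _ "\<lambda>k. r * \<nu> k"]) (simp add: sum_distrib_left mult.assoc)
qed

theorem lagrangian_duality:
  fixes g :: "'k \<Rightarrow> 'x form"
  assumes "finite I" "finite M" "finite Kx"
    and "satisfies I M x0" "\<forall>k\<in>Kx. form_eval I (g k) x0 = 0"
    and bound: "\<And>x. satisfies I M x \<Longrightarrow> \<forall>k\<in>Kx. form_eval I (g k) x = 0
      \<Longrightarrow> r \<le> (\<Sum>i\<in>I. u i * x i)"
  shows "\<exists>lam. \<forall>x. satisfies I M x
    \<longrightarrow> r \<le> (\<Sum>i\<in>I. u i * x i) + (\<Sum>k\<in>Kx. lam k * form_eval I (g k) x)"
proof -
  define G where "G = g ` Kx \<union> (\<lambda>k. form_scale (-1) (g k)) ` Kx"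
  have sat_G: "satisfies I G x \<longleftrightarrow> (\<forall>k\<in>Kx. form_eval I (g k) x = 0)" for x
    unfolding satisfies_def G_def by (simp add: ball_Un) (fastforce)
  have "finite (M \<union> G)" using assms(2,3) by (simp add: G_def)
  with farkas_affine[of I "M \<union> G" x0 "- r" u] assms(1,4,5) bound
  obtain \<psi> where \<psi>: "\<psi> \<in> form_cone (M \<union> G)" "\<forall>i\<in>I. fst \<psi> i = u i" "snd \<psi> \<le> - r"
    by (auto simp: sat_G)
  then obtain \<alpha> \<beta> where \<alpha>: "\<alpha> \<in> form_cone M"
    and \<beta>: "\<beta> \<in> form_cone G" and \<psi>_eq: "\<psi> = form_add \<alpha> \<beta>"
    using form_cone_Un[OF \<psi>(1)] by blast
  obtain \<nu> where \<nu>: "\<forall>x. form_eval I \<beta> x = (\<Sum>k\<in>Kx. \<nu> k * form_eval I (g k) x)"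
    using form_cone_equalities[OF assms(3) \<beta>[unfolded G_def]] by blast
  have "r \<le> (\<Sum>i\<in>I. u i * x i) + (\<Sum>k\<in>Kx. - \<nu> k * form_eval I (g k) x)"
    if "satisfies I M x" for x
  proof -
    have "form_eval I \<alpha> x + (\<Sum>k\<in>Kx. \<nu> k * form_eval I (g k) x) = form_eval I \<psi> x"
      using \<psi>_eq \<nu> by simp
    also have "\<dots> = snd \<psi> + (\<Sum>i\<in>I. u i * x i)"
      using \<psi>(2) by (simp add: form_eval_def)
    finally have "form_eval I \<alpha> x + (\<Sum>k\<in>Kx. \<nu> k * form_eval I (g k) x)
      = snd \<psi> + (\<Sum>i\<in>I. u i * x i)" .
    moreover have "(\<Sum>k\<in>Kx. - \<nu> k * form_eval I (g k) x) = - (\<Sum>k\<in>Kx. \<nu> k * form_eval I (g k) x)"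
      by (simp add: sum_negf)
    ultimately show ?thesis
      using \<psi>(3) form_cone_nonneg[OF \<alpha> that] by linarith
  qed
  then show ?thesis by (intro exI[of _ "\<lambda>k. - \<nu> k"] allI impI)
qed

section \<open>The QPBO relaxation as a McCormick relaxation\<close>

definition mccormick :: "'a set \<Rightarrow> ('a \<times> 'a) set \<Rightarrow> ('a \<Rightarrow> real) \<Rightarrow> ('a \<times> 'a \<Rightarrow> real) \<Rightarrow> bool" where
  "mccormick A B z1 z11 \<longleftrightarrow> (\<forall>a\<in>A. 0 \<le> z1 a \<and> z1 a \<le> 1) \<and>
     (\<forall>(i, j)\<in>B. 0 \<le> z11 (i, j) \<and> z11 (i, j) \<le> z1 i \<and> z11 (i, j) \<le> z1 j \<and>
        z1 i + z1 j - 1 \<le> z11 (i, j))"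

lemma qpbo_feasible_imp_mccormick:
  assumes "B \<subseteq> A \<times> A" "qpbo_feasible A B z1 z0 z11 z10 z01 z00"
  shows "mccormick A B z1 z11"
proof -
  have nodes: "0 \<le> z1 a \<and> z1 a \<le> 1" if "a \<in> A" for a
    using that assms(2) by (auto simp: qpbo_feasible_def)
  have edges: "0 \<le> z11 (i, j) \<and> z11 (i, j) \<le> z1 i \<and> z11 (i, j) \<le> z1 j \<and>
    z1 i + z1 j - 1 \<le> z11 (i, j)" if "(i, j) \<in> B" for i j
  proof -
    have "i \<in> A" using that assms(1) by blast
    with that assms(2) show ?thesis unfolding qpbo_feasible_def by fastforce
  qed
  show ?thesis unfolding mccormick_def using nodes edges by blast
qed

lemma mccormick_imp_qpbo_feasible:
  "mccormick A B z1 z11 \<Longrightarrow> qpbo_feasible A B z1 (\<lambda>a. 1 - z1 a) z11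
     (\<lambda>e. z1 (fst e) - z11 e) (\<lambda>e. z1 (snd e) - z11 e) (\<lambda>e. 1 - z1 (fst e) - z1 (snd e) + z11 e)"
  unfolding mccormick_def qpbo_feasible_def by auto

lemma qpbo_lp_value_mccormick:
  assumes "B \<subseteq> A \<times> A"
  shows "qpbo_lp_value A a B b c = Inf {ereal (c + (\<Sum>i\<in>A. a i * z1 i) + (\<Sum>e\<in>B. b e * z11 e))
    | z1 z11. mccormick A B z1 z11}"
proof -
  have "{ereal (c + (\<Sum>i\<in>A. a i * z1 i) + (\<Sum>e\<in>B. b e * z11 e)) | z1 z0 z11 z10 z01 z00.
      qpbo_feasible A B z1 z0 z11 z10 z01 z00}
    = {ereal (c + (\<Sum>i\<in>A. a i * z1 i) + (\<Sum>e\<in>B. b e * z11 e)) | z1 z11. mccormick A B z1 z11}"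
    (is "?Q = ?M")
  proof
    show "?Q \<subseteq> ?M" using qpbo_feasible_imp_mccormick[OF assms] by blast
    show "?M \<subseteq> ?Q" using mccormick_imp_qpbo_feasible by blast
  qed
  then show ?thesis by (simp add: qpbo_lp_value_def)
qed

section \<open>Lagrangian duality for the labelling problem\<close>

definition labelling_objective ::
  "'v set \<Rightarrow> 'p set \<Rightarrow> ('v \<times> 'v) set \<Rightarrow> ('v \<Rightarrow> 'p \<Rightarrow> real) \<Rightarrow> ('v \<Rightarrow> 'v \<Rightarrow> 'p \<Rightarrow> 'p \<Rightarrow> real)
   \<Rightarrow> ('v \<times> 'p \<Rightarrow> real) \<Rightarrow> (('v \<times> 'p) \<times> ('v \<times> 'p) \<Rightarrow> real) \<Rightarrow> real" where
  "labelling_objective V P E th1 th2 z1 z11 =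
     (\<Sum>(i, p)\<in>V \<times> P. th1 i p * z1 (i, p)) + (\<Sum>e\<in>lag_vars E P. lag_quad th2 e * z11 e)"

definition labelling_feasible ::
  "'v set \<Rightarrow> 'p set \<Rightarrow> ('v \<times> 'v) set \<Rightarrow> ('v \<times> 'p \<Rightarrow> real) \<Rightarrow> (('v \<times> 'p) \<times> ('v \<times> 'p) \<Rightarrow> real)
   \<Rightarrow> bool" where
  "labelling_feasible V P E z1 z11 \<longleftrightarrow>
     mccormick (V \<times> P) (lag_vars E P) z1 z11 \<and> (\<forall>i\<in>V. (\<Sum>p\<in>P. z1 (i, p)) = 1)"

lemma lag_vars_eq_image: "lag_vars E P = (\<lambda>((i, j), (p, q)). ((i, p), (j, q))) ` (E \<times> (P \<times> P))"
  by (force simp: lag_vars_def)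

lemma lag_vars_subset: "E \<subseteq> V \<times> V \<Longrightarrow> lag_vars E P \<subseteq> (V \<times> P) \<times> (V \<times> P)"
  by (auto simp: lag_vars_def)

lemma finite_lag_vars: "finite E \<Longrightarrow> finite P \<Longrightarrow> finite (lag_vars E P)"
  by (simp add: lag_vars_eq_image)

lemma lagrangian_objective_eq:
  "lag_const V lam + (\<Sum>a\<in>V \<times> P. lag_lin th1 lam a * z1 a) + (\<Sum>e\<in>lag_vars E P. lag_quad th2 e * z11 e)
   = labelling_objective V P E th1 th2 z1 z11 + (\<Sum>i\<in>V. lam i * ((\<Sum>p\<in>P. z1 (i, p)) - 1))"
proof -
  have "(\<Sum>a\<in>V \<times> P. lag_lin th1 lam a * z1 a)
    = (\<Sum>(i, p)\<in>V \<times> P. th1 i p * z1 (i, p)) + (\<Sum>i\<in>V. lam i * (\<Sum>p\<in>P. z1 (i, p)))"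
    by (simp add: lag_lin_def split_def distrib_right sum.distrib sum_distrib_left
        sum.cartesian_product)
  then show ?thesis
    by (simp add: labelling_objective_def lag_const_def right_diff_distrib sum_subtractf)
qed

lemma D_QPBO_mccormick:
  "E \<subseteq> V \<times> V \<Longrightarrow> D_QPBO V P E th1 th2 lam =
    Inf {ereal (labelling_objective V P E th1 th2 z1 z11 + (\<Sum>i\<in>V. lam i * ((\<Sum>p\<in>P. z1 (i, p)) - 1)))
      | z1 z11. mccormick (V \<times> P) (lag_vars E P) z1 z11}"
  by (simp add: D_QPBO_def qpbo_lp_value_mccormick lag_vars_subset lagrangian_objective_eq)

lemma local_lp_feasible_iff:
  assumes "E \<subseteq> V \<times> V"
  shows "local_lp_feasible V P E y1 y2 \<longleftrightarrow>
    labelling_feasible V P E (\<lambda>(i, p). y1 i p) (\<lambda>((i, p), (j, q)). y2 i j p q)"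
  using assms
  by (auto simp: local_lp_feasible_def labelling_feasible_def mccormick_def lag_vars_def)
    (fastforce+)

lemma local_objective_eq:
  "(\<Sum>i\<in>V. \<Sum>p\<in>P. th1 i p * y1 i p) + (\<Sum>(i, j)\<in>E. \<Sum>p\<in>P. \<Sum>q\<in>P. th2 i j p q * y2 i j p q)
   = labelling_objective V P E th1 th2 (\<lambda>(i, p). y1 i p) (\<lambda>((i, p), (j, q)). y2 i j p q)"
proof -
  have "inj_on (\<lambda>((i, j), (p, q)). ((i, p), (j, q))) (E \<times> (P \<times> P))"
    by (auto simp: inj_on_def)
  then show ?thesis
    by (simp add: labelling_objective_def lag_vars_eq_image sum.reindex lag_quad_def
        sum.cartesian_product split_def)
qed

lemma local_lp_value_eq:
  assumes "E \<subseteq> V \<times> V"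
  shows "local_lp_value V P E th1 th2 = Inf {ereal (labelling_objective V P E th1 th2 z1 z11)
    | z1 z11. labelling_feasible V P E z1 z11}"
proof -
  have "{ereal ((\<Sum>i\<in>V. \<Sum>p\<in>P. th1 i p * y1 i p)
        + (\<Sum>(i, j)\<in>E. \<Sum>p\<in>P. \<Sum>q\<in>P. th2 i j p q * y2 i j p q)) | y1 y2.
      local_lp_feasible V P E y1 y2}
    = {ereal (labelling_objective V P E th1 th2 z1 z11) | z1 z11. labelling_feasible V P E z1 z11}"
    (is "?L = ?R")
  proof
    show "?L \<subseteq> ?R"
      by (auto simp: local_lp_feasible_iff[OF assms] local_objective_eq)
    show "?R \<subseteq> ?L"
    proof
      fix r assume "r \<in> ?R"
      then obtain z1 z11 where r: "r = ereal (labelling_objective V P E th1 th2 z1 z11)"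
        and feasible: "labelling_feasible V P E z1 z11" by blast
      define y1 where "y1 i p = z1 (i, p)" for i p
      define y2 where "y2 i j p q = z11 ((i, p), (j, q))" for i j p q
      have eqs: "(\<lambda>(i, p). y1 i p) = z1" "(\<lambda>((i, p), (j, q)). y2 i j p q) = z11"
        by (auto simp: y1_def y2_def)
      have "local_lp_feasible V P E y1 y2"
        unfolding local_lp_feasible_iff[OF assms] eqs by (rule feasible)
      moreover have "r = ereal ((\<Sum>i\<in>V. \<Sum>p\<in>P. th1 i p * y1 i p)
        + (\<Sum>(i, j)\<in>E. \<Sum>p\<in>P. \<Sum>q\<in>P. th2 i j p q * y2 i j p q))"
        unfolding local_objective_eq eqs by (rule r)
      ultimately show "r \<in> ?L" by blast
    qed
  qed
  then show ?thesis by (simp add: local_lp_value_def)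
qed

lemma D_QPBO_le_local_lp_value:
  assumes "E \<subseteq> V \<times> V"
  shows "D_QPBO V P E th1 th2 lam \<le> local_lp_value V P E th1 th2"
  unfolding D_QPBO_mccormick[OF assms] local_lp_value_eq[OF assms]
proof (rule Inf_superset_mono, clarify)
  fix z1 z11 assume "labelling_feasible V P E z1 z11"
  then have "mccormick (V \<times> P) (lag_vars E P) z1 z11"
    and "labelling_objective V P E th1 th2 z1 z11 = labelling_objective V P E th1 th2 z1 z11
        + (\<Sum>i\<in>V. lam i * ((\<Sum>p\<in>P. z1 (i, p)) - 1))"
    by (simp_all add: labelling_feasible_def cong: sum.cong)
  then show "\<exists>z1' z11'. ereal (labelling_objective V P E th1 th2 z1 z11) =
      ereal (labelling_objective V P E th1 th2 z1' z11'
        + (\<Sum>i\<in>V. lam i * ((\<Sum>p\<in>P. z1' (i, p)) - 1)))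
      \<and> mccormick (V \<times> P) (lag_vars E P) z1' z11'"
    by (metis (no_types, lifting))
qed

lemma one_hot_labelling_feasible:
  assumes "finite P" "p0 \<in> P"
  shows "labelling_feasible V P E (\<lambda>(i, p). of_bool (p = p0))
    (\<lambda>((i, p), (j, q)). of_bool (p = p0) * of_bool (q = p0))"
  using assms by (auto simp: labelling_feasible_def mccormick_def)

lemma Inl_mem_Plus [simp]: "Inl a \<in> A <+> B \<longleftrightarrow> a \<in> A"
  and Inr_mem_Plus [simp]: "Inr b \<in> A <+> B \<longleftrightarrow> b \<in> B"
  by auto

definition mccormick_forms :: "'a set \<Rightarrow> ('a \<times> 'a) set \<Rightarrow> ('a + 'a \<times> 'a) form set" where
  "mccormick_forms A B =
     (\<lambda>a. form_var (Inl a)) ` A \<union> (\<lambda>a. form_diff (form_const 1) (form_var (Inl a))) ` A \<union>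
     (\<lambda>e. form_var (Inr e)) ` B \<union>
     (\<lambda>e. form_diff (form_var (Inl (fst e))) (form_var (Inr e))) ` B \<union>
     (\<lambda>e. form_diff (form_var (Inl (snd e))) (form_var (Inr e))) ` B \<union>
     (\<lambda>e. form_add (form_diff (form_var (Inr e)) (form_add (form_var (Inl (fst e))) (form_var (Inl (snd e)))))
       (form_const 1)) ` B"

lemma finite_mccormick_forms: "finite A \<Longrightarrow> finite B \<Longrightarrow> finite (mccormick_forms A B)"
  by (simp add: mccormick_forms_def)

lemma satisfies_mccormick_forms:
  assumes "finite A" "finite B" "B \<subseteq> A \<times> A"
  shows "satisfies (A <+> B) (mccormick_forms A B) x \<longleftrightarrow> mccormick A B (x \<circ> Inl) (x \<circ> Inr)"
proof -
  have "fst e \<in> A" "snd e \<in> A" if "e \<in> B" for e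
    using that assms(3) by auto
  then show ?thesis
    using assms(1,2)
    by (auto simp: satisfies_def mccormick_forms_def mccormick_def ball_Un)
qed

definition label_sum_form :: "'p set \<Rightarrow> 'v \<Rightarrow> ('v \<times> 'p + 'b) form" where
  "label_sum_form P i = (case_sum (\<lambda>(k, p). of_bool (k = i \<and> p \<in> P)) (\<lambda>_. 0), - 1)"

lemma form_eval_label_sum_form:
  assumes "finite V" "finite P" "finite B" "i \<in> V"
  shows "form_eval (V \<times> P <+> B) (label_sum_form P i) x = (\<Sum>p\<in>P. x (Inl (i, p))) - 1"
proof -
  have "(\<Sum>(k, p)\<in>V \<times> P. of_bool (k = i \<and> p \<in> P) * x (Inl (k, p)))
    = (\<Sum>k\<in>V. \<Sum>p\<in>P. of_bool (k = i) * x (Inl (k, p)))"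
    by (simp add: sum.cartesian_product[symmetric] cong: sum.cong)
  also have "\<dots> = (\<Sum>k\<in>V. if k = i then (\<Sum>p\<in>P. x (Inl (k, p))) else 0)"
    by (rule sum.cong) auto
  finally show ?thesis
    using assms by (simp add: form_eval_def label_sum_form_def sum.Plus split_def)
qed

lemma sum_Plus_labelling_objective:
  assumes "finite V" "finite P" "finite E"
  shows "(\<Sum>v\<in>V \<times> P <+> lag_vars E P. case_sum (\<lambda>(i, p). th1 i p) (lag_quad th2) v * x v)
    = labelling_objective V P E th1 th2 (x \<circ> Inl) (x \<circ> Inr)"
  using assms by (simp add: sum.Plus finite_lag_vars labelling_objective_def split_def)

lemma satisfies_labelling_forms_iff:
  assumes "finite V" "finite P" "E \<subseteq> V \<times> V"
  shows "satisfies (V \<times> P <+> lag_vars E P) (mccormick_forms (V \<times> P) (lag_vars E P)) x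
      \<and> (\<forall>i\<in>V. form_eval (V \<times> P <+> lag_vars E P) (label_sum_form P i) x = 0)
    \<longleftrightarrow> labelling_feasible V P E (x \<circ> Inl) (x \<circ> Inr)"
proof -
  have "finite E" using assms(1,3) finite_subset by blast
  then have "finite (lag_vars E P)" using assms(2) by (simp add: finite_lag_vars)
  then show ?thesis
    using assms satisfies_mccormick_forms[of "V \<times> P" "lag_vars E P"]
    by (auto simp: labelling_feasible_def lag_vars_subset form_eval_label_sum_form)
qed

lemma exists_D_QPBO_ge_lower_bound:
  fixes V :: "'v set" and P :: "'p set"
  assumes "finite V" "finite P" "E \<subseteq> V \<times> V" "P \<noteq> {}"
    and bound: "\<And>z1 z11. labelling_feasible V P E z1 z11
      \<Longrightarrow> r \<le> labelling_objective V P E th1 th2 z1 z11"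
  shows "\<exists>lam. ereal r \<le> D_QPBO V P E th1 th2 lam"
proof -
  let ?I = "V \<times> P <+> lag_vars E P" and ?M = "mccormick_forms (V \<times> P) (lag_vars E P)"
  define u where "u = case_sum (\<lambda>(i, p). th1 i p) (lag_quad th2)"
  have "finite E" using assms(1,3) finite_subset by blast
  then have fin: "finite (V \<times> P)" "finite (lag_vars E P)"
    using assms(1,2) by (simp_all add: finite_lag_vars)
  have objective: "(\<Sum>v\<in>?I. u v * x v) = labelling_objective V P E th1 th2 (x \<circ> Inl) (x \<circ> Inr)"
    for x
    unfolding u_def using sum_Plus_labelling_objective[OF assms(1,2) \<open>finite E\<close>] .
  note feasible_iff = satisfies_labelling_forms_iff[OF assms(1-3)]
  obtain p0 where "p0 \<in> P" using assms(4) by blast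
  define x0 :: "'v \<times> 'p + ('v \<times> 'p) \<times> ('v \<times> 'p) \<Rightarrow> real"
    where "x0 = case_sum (\<lambda>(i, p). of_bool (p = p0)) (\<lambda>((i, p), (j, q)). of_bool (p = p0) * of_bool (q = p0))"
  have "labelling_feasible V P E (x0 \<circ> Inl) (x0 \<circ> Inr)"
    unfolding x0_def case_sum_o_inj by (rule one_hot_labelling_feasible[OF assms(2) \<open>p0 \<in> P\<close>])
  then have "satisfies ?I ?M x0" "\<forall>i\<in>V. form_eval ?I (label_sum_form P i) x0 = 0"
    using feasible_iff by blast+
  then have "\<exists>lam. \<forall>x. satisfies ?I ?M x \<longrightarrow>
      r \<le> (\<Sum>v\<in>?I. u v * x v) + (\<Sum>i\<in>V. lam i * form_eval ?I (label_sum_form P i) x)"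
    using fin assms(1) finite_mccormick_forms
  proof (intro lagrangian_duality)
    show "r \<le> (\<Sum>v\<in>?I. u v * x v)"
      if "satisfies ?I ?M x" "\<forall>i\<in>V. form_eval ?I (label_sum_form P i) x = 0" for x
      unfolding objective by (rule bound) (use feasible_iff that in blast)
  qed simp_all
  then obtain lam where lam: "\<And>x. satisfies ?I ?M x \<Longrightarrow>
      r \<le> (\<Sum>v\<in>?I. u v * x v) + (\<Sum>i\<in>V. lam i * form_eval ?I (label_sum_form P i) x)"
    by blast
  have "ereal r \<le> D_QPBO V P E th1 th2 lam"
    unfolding D_QPBO_mccormick[OF assms(3)]
  proof (rule Inf_greatest, clarify)
    fix z1 z11 assume "mccormick (V \<times> P) (lag_vars E P) z1 z11"
    then have "satisfies ?I ?M (case_sum z1 z11)"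
      using satisfies_mccormick_forms[OF fin lag_vars_subset[OF assms(3)]] by (simp add: case_sum_o_inj)
    from lam[OF this] show "ereal r \<le> ereal (labelling_objective V P E th1 th2 z1 z11
        + (\<Sum>i\<in>V. lam i * ((\<Sum>p\<in>P. z1 (i, p)) - 1)))"
      using form_eval_label_sum_form[OF assms(1,2) fin(2)]
      by (simp add: objective case_sum_o_inj cong: sum.cong)
  qed
  then show ?thesis by blast
qed

lemma exists_D_QPBO_ge_local_lp_value:
  assumes "finite V" "finite P" "E \<subseteq> V \<times> V" "P \<noteq> {}"
  shows "\<exists>lam. local_lp_value V P E th1 th2 \<le> D_QPBO V P E th1 th2 lam"
proof (cases "local_lp_value V P E th1 th2")
  case (real r)
  have "r \<le> labelling_objective V P E th1 th2 z1 z11" if "labelling_feasible V P E z1 z11" for z1 z11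
  proof -
    have "ereal r \<le> ereal (labelling_objective V P E th1 th2 z1 z11)"
      unfolding real[symmetric] local_lp_value_eq[OF assms(3)] using that by (blast intro: Inf_lower)
    then show ?thesis by simp
  qed
  with exists_D_QPBO_ge_lower_bound[OF assms] real show ?thesis by auto
next
  case PInf
  obtain p0 where "p0 \<in> P" using assms(4) by blast
  then have "local_lp_value V P E th1 th2 \<le> ereal (labelling_objective V P E th1 th2
      (\<lambda>(i, p). of_bool (p = p0)) (\<lambda>((i, p), (j, q)). of_bool (p = p0) * of_bool (q = p0)))"
    unfolding local_lp_value_eq[OF assms(3)]
    using one_hot_labelling_feasible[OF assms(2)] by (blast intro: Inf_lower)
  with PInf show ?thesis by simp
next
  case MInf
  then show ?thesis by simp
qed

lemma lag_vars_no_labels [simp]: "lag_vars E {} = {}"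
  by (simp add: lag_vars_def)

lemma D_QPBO_no_labels:
  assumes "E \<subseteq> V \<times> V"
  shows "D_QPBO V {} E th1 th2 lam = ereal (- (\<Sum>i\<in>V. lam i))"
proof -
  have "{ereal (labelling_objective V {} E th1 th2 z1 z11 + (\<Sum>i\<in>V. lam i * ((\<Sum>p\<in>{}. z1 (i, p)) - 1)))
      | z1 z11. mccormick (V \<times> {}) (lag_vars E {}) z1 z11} = {ereal (- (\<Sum>i\<in>V. lam i))}"
    by (auto simp: labelling_objective_def mccormick_def sum_negf)
  then show ?thesis by (simp add: D_QPBO_mccormick[OF assms])
qed

lemma local_lp_value_no_labels:
  assumes "E \<subseteq> V \<times> V"
  shows "local_lp_value V {} E th1 th2 = (if V = {} then 0 else \<infinity>)"
proof -
  have "{ereal (labelling_objective V {} E th1 th2 z1 z11) | z1 z11. labelling_feasible V {} E z1 z11}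
    = (if V = {} then {0} else {})"
    by (auto simp: labelling_objective_def labelling_feasible_def mccormick_def zero_ereal_def)
  then show ?thesis by (simp add: local_lp_value_eq[OF assms] top_ereal_def)
qed

lemma SUP_minus_sum_eq_infinity:
  assumes "finite V" "V \<noteq> {}"
  shows "(SUP lam. ereal (- (\<Sum>i\<in>V. lam i))) = \<infinity>"
proof (rule SUP_PInfty)
  fix n :: nat
  have "1 \<le> card V" using assms by (simp add: Suc_le_eq card_gt_0_iff)
  then have "real n \<le> real (card V) * real n"
    using mult_right_mono[of 1 "real (card V)" "real n"] by simp
  then show "\<exists>lam\<in>UNIV. ereal (real n) \<le> ereal (- (\<Sum>i\<in>V. lam i))"
    by (intro bexI[of _ "\<lambda>_. - real n"]) auto
qed

theorem theorem8:
  fixes V :: "'v set" and P :: "'p set" and E :: "('v \<times> 'v) set"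
    and th1 :: "'v \<Rightarrow> 'p \<Rightarrow> real" and th2 :: "'v \<Rightarrow> 'v \<Rightarrow> 'p \<Rightarrow> 'p \<Rightarrow> real"
  assumes "finite V" and "finite P"
    and "E \<subseteq> V \<times> V"
    and "\<forall>(i,j)\<in>E. i \<noteq> j"
    and "\<forall>(i,j)\<in>E. (j,i) \<notin> E"
  shows "(SUP lam. D_QPBO V P E th1 th2 lam) = local_lp_value V P E th1 th2
         \<and> (P \<noteq> {} \<longrightarrow> (\<exists>lam. D_QPBO V P E th1 th2 lam = local_lp_value V P E th1 th2))"
proof (cases "P = {}")
  case True
  then show ?thesis
    using SUP_minus_sum_eq_infinity[OF assms(1)]
    by (simp add: D_QPBO_no_labels[OF assms(3)] local_lp_value_no_labels[OF assms(3)] zero_ereal_def)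
next
  case False
  then obtain lam0 where "local_lp_value V P E th1 th2 \<le> D_QPBO V P E th1 th2 lam0"
    using exists_D_QPBO_ge_local_lp_value[OF assms(1-3)] by blast
  then have attained: "D_QPBO V P E th1 th2 lam0 = local_lp_value V P E th1 th2"
    using D_QPBO_le_local_lp_value[OF assms(3)] by (blast intro: antisym)
  have "(SUP lam. D_QPBO V P E th1 th2 lam) = local_lp_value V P E th1 th2"
  proof (rule antisym)
    show "(SUP lam. D_QPBO V P E th1 th2 lam) \<le> local_lp_value V P E th1 th2"
      by (rule SUP_least) (rule D_QPBO_le_local_lp_value[OF assms(3)])
    show "local_lp_value V P E th1 th2 \<le> (SUP lam. D_QPBO V P E th1 th2 lam)"
      unfolding attained[symmetric] by (rule SUP_upper) simp
  qed
  with attained show ?thesis by blast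
qed

end
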